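(* Let $K$ be a field (of arbitrary characteristic), $0\ne q\in K$, $\phi$ the $K$-algebra endomorphism of $K[x]$ with $\phi(x)=qx$, and $\delta=\mathrm{id}-\phi$. Then: 1) if $q=1$, then $\operatorname{Im}\delta=0$; 2) if $q$ is not a root of unity in $K$, then $\operatorname{Im}\delta=xK[x]$; 3) if $q$ is a root of unity in $K$, then $\mathfrak{r}(\operatorname{Im}\delta)=\{0\}$. In all these cases $\operatorname{Im}\delta$ is a Mathieu subspace of $K[x]$.
   Context: $\mathrm{id}$ is the identity map of $K[x]$. For a subset $V$ of $K[x]$, $\mathfrak{r}(V)=\{a\in K[x]\mid a^m\in V\text{ for all } m\gg0\}$. A $K$-subspace $V$ of a commutative $K$-algebra $\mathcal{A}$ is a Mathieu subspace if for all $a,b\in\mathcal{A}$ with $a^m\in V$ for all $m\ge 1$, one has $a^mb\in V$ for all $m\gg 0$. *)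

theory Defs
  imports "HOL-Computational_Algebra.Polynomial"
begin

definition phi_q :: "'a::field \<Rightarrow> 'a poly \<Rightarrow> 'a poly" where
  "phi_q q p = pcompose p [:0, q:]"

definition delta_q :: "'a::field \<Rightarrow> 'a poly \<Rightarrow> 'a poly" where
  "delta_q q p = p - phi_q q p"

definition radical_set :: "'a::field poly set \<Rightarrow> 'a poly set" where
  "radical_set V = {a. \<forall>\<^sub>F m in sequentially. a ^ m \<in> V}"

definition poly_subspace :: "'a::field poly set \<Rightarrow> bool" where
  "poly_subspace V \<longleftrightarrow> 0 \<in> V \<and> (\<forall>u\<in>V. \<forall>v\<in>V. u + v \<in> V) \<and> (\<forall>c. \<forall>u\<in>V. smult c u \<in> V)"

definition mathieu_subspace :: "'a::field poly set \<Rightarrow> bool" where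
  "mathieu_subspace V \<longleftrightarrow> poly_subspace V \<and>
     (\<forall>a b. (\<forall>m\<ge>1. a ^ m \<in> V) \<longrightarrow> (\<forall>\<^sub>F m in sequentially. a ^ m * b \<in> V))"

definition root_of_unity :: "'a::field \<Rightarrow> bool" where
  "root_of_unity q \<longleftrightarrow> (\<exists>n::nat. n \<ge> 1 \<and> q ^ n = 1)"

end

theory Submission
  imports Defs
begin

text \<open>Since \<open>\<delta>\<close> multiplies the coefficient of \<open>x\<^sup>i\<close> by \<open>1 - q\<^sup>i\<close>, its image consists of the
  polynomials without monomials \<open>x\<^sup>i\<close> for which \<open>q\<^sup>i = 1\<close>. If \<open>q\<close> is not a root of unity this
  is the ideal \<open>x K[x]\<close>. If \<open>q\<^sup>n = 1\<close> and \<open>a \<noteq> 0\<close>, the leading monomial of \<open>a\<^sup>m\<close> for \<open>n\<close>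
  dividing \<open>m\<close> has an exponent \<open>i\<close> with \<open>q\<^sup>i = 1\<close>, so no such power lies in the image; this
  makes the radical trivial and the Mathieu condition vacuous.\<close>

lemma coeff_delta_q: "coeff (delta_q q p) i = (1 - q ^ i) * coeff p i"
  by (simp add: delta_q_def phi_q_def coeff_pcompose_linear algebra_simps)

lemma range_delta_q:
  "range (delta_q q) = {f. \<forall>i. q ^ i = 1 \<longrightarrow> coeff f i = 0}"
proof (intro equalityI subsetI)
  fix f :: "'a poly"
  assume f: "f \<in> {f. \<forall>i. q ^ i = 1 \<longrightarrow> coeff f i = 0}"
  define p where "p = Poly (map (\<lambda>i. coeff f i / (1 - q ^ i)) [0..<Suc (degree f)])"
  have coeff_p: "coeff p i = (if i \<le> degree f then coeff f i / (1 - q ^ i) else 0)" for i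
    unfolding p_def by (auto simp del: upt_Suc simp: nth_default_def)
  have "delta_q q p = f"
  proof (rule poly_eqI)
    fix i
    show "coeff (delta_q q p) i = coeff f i"
      using f by (cases "q ^ i = 1") (auto simp: coeff_delta_q coeff_p coeff_eq_0)
  qed
  then show "f \<in> range (delta_q q)"
    by (metis rangeI)
qed (auto simp: coeff_delta_q)

lemma poly_subspace_range_delta_q: "poly_subspace (range (delta_q q))"
  unfolding poly_subspace_def range_delta_q by auto

lemma not_root_of_unity_power_eq_1_iff:
  "\<not> root_of_unity q \<Longrightarrow> q ^ i = 1 \<longleftrightarrow> i = 0"
  unfolding root_of_unity_def by (cases i) auto

lemma coeff_0_zero_set_eq_x_multiples:
  "{f :: 'a::comm_ring_1 poly. coeff f 0 = 0} = {[:0, 1:] * f | f. True}"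
proof (intro equalityI subsetI)
  fix f :: "'a poly"
  assume "f \<in> {f. coeff f 0 = 0}"
  then obtain g where "f = pCons 0 g"
    by (cases f) auto
  then show "f \<in> {[:0, 1:] * f | f. True}"
    by auto
qed (auto simp: coeff_mult_0)

lemma range_delta_q_not_root_of_unity:
  "\<not> root_of_unity q \<Longrightarrow> range (delta_q q) = {f. coeff f 0 = 0}"
  unfolding range_delta_q by (auto simp: not_root_of_unity_power_eq_1_iff)

lemma power_in_range_delta_q_imp_zero:
  assumes "q ^ m = 1" and "a ^ m \<in> range (delta_q q)"
  shows "a = 0"
proof (rule ccontr)
  assume "a \<noteq> 0"
  then have "coeff (a ^ m) (m * degree a) \<noteq> 0"
    by (metis degree_power_eq lead_coeff_power leading_coeff_0_iff power_eq_0_iff)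
  moreover have "q ^ (m * degree a) = 1"
    using assms(1) by (simp add: power_mult)
  ultimately show False
    using assms(2) unfolding range_delta_q by blast
qed

lemma radical_set_range_delta_q:
  assumes "root_of_unity q"
  shows "radical_set (range (delta_q q)) = {0}"
proof safe
  obtain n where n: "n \<ge> 1" "q ^ n = 1"
    using assms unfolding root_of_unity_def by blast
  fix a
  assume "a \<in> radical_set (range (delta_q q))"
  then obtain N where N: "\<And>m. m \<ge> N \<Longrightarrow> a ^ m \<in> range (delta_q q)"
    unfolding radical_set_def eventually_sequentially by blast
  have "q ^ (n * N) = 1"
    using n(2) by (simp add: power_mult)
  moreover have "a ^ (n * N) \<in> range (delta_q q)"
    using n(1) by (intro N) simp
  ultimately show "a = 0"
    by (rule power_in_range_delta_q_imp_zero)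
next
  show "0 \<in> radical_set (range (delta_q q))"
    unfolding radical_set_def eventually_sequentially range_delta_q
    by (auto intro: exI[of _ 1] simp: power_0_left)
qed

lemma mathieu_subspace_range_delta_q: "mathieu_subspace (range (delta_q q))"
  unfolding mathieu_subspace_def
proof (intro conjI allI impI poly_subspace_range_delta_q)
  fix a b :: "'a poly"
  assume powers: "\<forall>m\<ge>1. a ^ m \<in> range (delta_q q)"
  show "\<forall>\<^sub>F m in sequentially. a ^ m * b \<in> range (delta_q q)"
  proof (cases "root_of_unity q")
    case True
    then obtain n where "n \<ge> 1" "q ^ n = 1"
      unfolding root_of_unity_def by blast
    with powers have "a = 0"
      by (intro power_in_range_delta_q_imp_zero) auto
    then show ?thesis
      unfolding eventually_sequentially range_delta_q
      by (intro exI[of _ 1]) (auto simp: power_0_left)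
  next
    case False
    with powers have "coeff a 0 = 0"
      by (auto simp: range_delta_q_not_root_of_unity)
    then show ?thesis
      unfolding eventually_sequentially range_delta_q_not_root_of_unity[OF False]
      by (intro exI[of _ 1]) (auto simp: coeff_mult_0 coeff_0_power)
  qed
qed

theorem lemma3p3:
  fixes q :: "'a::field"
  assumes "q \<noteq> 0"
  shows "(q = 1 \<longrightarrow> range (delta_q q) = {0})
    \<and> (\<not> root_of_unity q \<longrightarrow> range (delta_q q) = {[:0, 1:] * f | f. True})
    \<and> (root_of_unity q \<longrightarrow> radical_set (range (delta_q q)) = {0})
    \<and> mathieu_subspace (range (delta_q q))"
proof (intro conjI impI)
  assume "q = 1"
  then show "range (delta_q q) = {0}"
    by (auto simp: range_delta_q poly_eq_iff)
next
  assume "\<not> root_of_unity q"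
  then show "range (delta_q q) = {[:0, 1:] * f | f. True}"
    by (simp add: range_delta_q_not_root_of_unity coeff_0_zero_set_eq_x_multiples)
qed (simp_all add: radical_set_range_delta_q mathieu_subspace_range_delta_q)

end
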